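(* For finite asynchronous CCS, let $L_A$ be the set of labels of the transition system $A_I$ of the shape $-$ and $-\mid a.T_1$, for $a$ a channel name and $T_1$ a pure process. Then $L_A$-bisimilarity coincides with asynchronous bisimilarity: $\sim^{L_A}=\sim^A$.
   Context: Finite asynchronous CCS: names $a,b,\dots$; pure processes $P::=M\mid\bar a\mid(\nu a)P\mid P_1|P_2$ with summations $M::=\mathbf{0}\mid\tau.P\mid a.P\mid M_1+M_2$; extended processes also allow process variables $X$. Structural congruence $\equiv$: smallest congruence with $|$ commutative, associative, unit $\mathbf{0}$; $+$ commutative, associative, unit $\mathbf{0}$; $(\nu a)(\nu b)P\equiv(\nu b)(\nu a)P$; $(\nu a)(P|Q)\equiv P|(\nu a)Q$ if $a\notin fn(P)$; $\alpha$-conversion. Reduction $\rightsquigarrow$ (up to $\equiv$): $(a.P+M)|\bar a\rightsquigarrow P$, $\tau.P+M\rightsquigarrow P$, closed under $(\nu a)-$ and $-|R$. Ordinary LTS (up to $\equiv$), $\mu\in\{\tau,a,\bar a\}$: $a.P+M\xrightarrow{a}P$; $\tau.P+M\xrightarrow{\tau}P$; $\bar a\xrightarrow{\bar a}\mathbf{0}$; $P\xrightarrow{\mu}Q$ implies $(\nu a)P\xrightarrow{\mu}(\nu a)Q$ if $a\notin n(\mu)$ and $P|R\xrightarrow{\mu}Q|R$; $P\xrightarrow{a}P_1$, $Q\xrightarrow{\bar a}Q_1$ imply $P|Q\xrightarrow{\tau}P_1|Q_1$ (parallel composition commutative). Asynchronous bisimilarity $\sim^A$ is the largest symmetric relation $\mathcal{R}$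 such that if $P\,\mathcal{R}\,Q$: $P\xrightarrow{\tau}P'$ implies $Q\xrightarrow{\tau}Q'$ with $P'\,\mathcal{R}\,Q'$; $P\xrightarrow{\bar a}P'$ implies $Q\xrightarrow{\bar a}Q'$ with $P'\,\mathcal{R}\,Q'$; $P\xrightarrow{a}P'$ implies either $Q\xrightarrow{a}Q'$ with $P'\,\mathcal{R}\,Q'$ or $Q\xrightarrow{\tau}Q'$ with $P'\,\mathcal{R}\,Q'|\bar a$. The LTS $A$: (Tau) $P\rightsquigarrow Q$ gives $P\xrightarrow{-}Q$; (Rcv) $P\equiv(\nu A)(a.Q+M|R)$, $a\notin A$ gives $P\xrightarrow{-|\bar a}(\nu A)(Q|R)$; (Snd) $P\equiv(\nu A)(\bar a|Q)$, $a\notin A$ gives $P\xrightarrow{-|a.X_1}(\nu A)(Q|X_1)$. $A_I$ instantiates the process variable: $P\xrightarrow{C[-]}_{A_I}Q$ iff $P\xrightarrow{C_\epsilon[-]}Q_\epsilon$ in $A$ and a capture-avoiding substitution $\sigma$ of a pure process for $X_1$ has $Q_\epsilon\sigma\equiv Q$, $C_\epsilon[-]\sigma=C[-]$. For a set $L$ of labels, an $L$-bisimulation is a symmetric relation $\mathcal{R}$ such that if $P\,\mathcal{R}\,Q$ and $P\xrightarrow{C[-]}_{A_I}P'$ then: if $C[-]\in L$, $Q\xrightarrow{C[-]}_{A_I}Q'$ with $P'\,\mathcal{R}\,Q'$; otherwise $C[Q]\rightsquigarrow Q'$ with $P'\,\mathcal{R}\,Q'$. $\sim^L$ is the largest $L$-bisimulation.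 *)

theory Defs
  imports Main
begin

type_synonym name = nat

datatype proc =
    Sum summ
  | Out name
  | Res name proc
  | Par proc proc
  | Var nat
and summ =
    SNil
  | STau proc
  | SIn name proc
  | SChoice summ summ

abbreviation Zero :: proc where "Zero \<equiv> Sum SNil"

primrec pure :: "proc \<Rightarrow> bool" and pure_s :: "summ \<Rightarrow> bool" where
  "pure (Sum M) = pure_s M"
| "pure (Out a) = True"
| "pure (Res a P) = pure P"
| "pure (Par P Q) = (pure P \<and> pure Q)"
| "pure (Var n) = False"
| "pure_s SNil = True"
| "pure_s (STau P) = pure P"
| "pure_s (SIn a P) = pure P"
| "pure_s (SChoice M N) = (pure_s M \<and> pure_s N)"

primrec fn :: "proc \<Rightarrow> name set" and fn_s :: "summ \<Rightarrow> name set" where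
  "fn (Sum M) = fn_s M"
| "fn (Out a) = {a}"
| "fn (Res a P) = fn P - {a}"
| "fn (Par P Q) = fn P \<union> fn Q"
| "fn (Var n) = {}"
| "fn_s SNil = {}"
| "fn_s (STau P) = fn P"
| "fn_s (SIn a P) = insert a (fn P)"
| "fn_s (SChoice M N) = fn_s M \<union> fn_s N"

definition swapn :: "name \<Rightarrow> name \<Rightarrow> name \<Rightarrow> name" where
  "swapn a b c = (if c = a then b else if c = b then a else c)"

primrec pswap :: "name \<Rightarrow> name \<Rightarrow> proc \<Rightarrow> proc" and sswap :: "name \<Rightarrow> name \<Rightarrow> summ \<Rightarrow> summ" where
  "pswap a b (Sum M) = Sum (sswap a b M)"
| "pswap a b (Out c) = Out (swapn a b c)"
| "pswap a b (Res c P) = Res (swapn a b c) (pswap a b P)"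
| "pswap a b (Par P Q) = Par (pswap a b P) (pswap a b Q)"
| "pswap a b (Var n) = Var n"
| "sswap a b SNil = SNil"
| "sswap a b (STau P) = STau (pswap a b P)"
| "sswap a b (SIn c P) = SIn (swapn a b c) (pswap a b P)"
| "sswap a b (SChoice M N) = SChoice (sswap a b M) (sswap a b N)"

inductive scong :: "proc \<Rightarrow> proc \<Rightarrow> bool" (infix "\<equiv>\<^sub>s" 50)
  and scong_s :: "summ \<Rightarrow> summ \<Rightarrow> bool" (infix "\<equiv>\<^sub>m" 50) where
  refl: "P \<equiv>\<^sub>s P"
| sym: "P \<equiv>\<^sub>s Q \<Longrightarrow> Q \<equiv>\<^sub>s P"
| trans: "P \<equiv>\<^sub>s Q \<Longrightarrow> Q \<equiv>\<^sub>s R \<Longrightarrow> P \<equiv>\<^sub>s R"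
| refl_s: "M \<equiv>\<^sub>m M"
| sym_s: "M \<equiv>\<^sub>m N \<Longrightarrow> N \<equiv>\<^sub>m M"
| trans_s: "M \<equiv>\<^sub>m N \<Longrightarrow> N \<equiv>\<^sub>m K \<Longrightarrow> M \<equiv>\<^sub>m K"
| cong_Sum: "M \<equiv>\<^sub>m N \<Longrightarrow> Sum M \<equiv>\<^sub>s Sum N"
| cong_Res: "P \<equiv>\<^sub>s Q \<Longrightarrow> Res a P \<equiv>\<^sub>s Res a Q"
| cong_Par: "P \<equiv>\<^sub>s P' \<Longrightarrow> Q \<equiv>\<^sub>s Q' \<Longrightarrow> Par P Q \<equiv>\<^sub>s Par P' Q'"
| cong_Tau: "P \<equiv>\<^sub>s Q \<Longrightarrow> STau P \<equiv>\<^sub>m STau Q"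
| cong_In: "P \<equiv>\<^sub>s Q \<Longrightarrow> SIn a P \<equiv>\<^sub>m SIn a Q"
| cong_Choice: "M \<equiv>\<^sub>m M' \<Longrightarrow> N \<equiv>\<^sub>m N' \<Longrightarrow> SChoice M N \<equiv>\<^sub>m SChoice M' N'"
| par_comm: "Par P Q \<equiv>\<^sub>s Par Q P"
| par_assoc: "Par (Par P Q) R \<equiv>\<^sub>s Par P (Par Q R)"
| par_unit: "Par P Zero \<equiv>\<^sub>s P"
| choice_comm: "SChoice M N \<equiv>\<^sub>m SChoice N M"
| choice_assoc: "SChoice (SChoice M N) K \<equiv>\<^sub>m SChoice M (SChoice N K)"
| choice_unit: "SChoice M SNil \<equiv>\<^sub>m M"
| res_swap: "Res a (Res b P) \<equiv>\<^sub>s Res b (Res a P)"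
| res_extr: "a \<notin> fn P \<Longrightarrow> Res a (Par P Q) \<equiv>\<^sub>s Par P (Res a Q)"
| alpha: "b \<notin> fn (Res a P) \<Longrightarrow> Res a P \<equiv>\<^sub>s Res b (pswap a b P)"

definition ress :: "name list \<Rightarrow> proc \<Rightarrow> proc" where
  "ress A P = foldr Res A P"

inductive red :: "proc \<Rightarrow> proc \<Rightarrow> bool" where
  comm: "red (Par (Sum (SChoice (SIn a P) M)) (Out a)) P"
| tau: "red (Sum (SChoice (STau P) M)) P"
| res: "red P Q \<Longrightarrow> red (Res a P) (Res a Q)"
| par: "red P Q \<Longrightarrow> red (Par P R) (Par Q R)"
| struct: "P \<equiv>\<^sub>s P' \<Longrightarrow> red P' Q' \<Longrightarrow> Q' \<equiv>\<^sub>s Q \<Longrightarrow> red P Q"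

datatype act = ATau | AIn name | AOut name

primrec act_names :: "act \<Rightarrow> name set" where
  "act_names ATau = {}"
| "act_names (AIn a) = {a}"
| "act_names (AOut a) = {a}"

inductive trans :: "proc \<Rightarrow> act \<Rightarrow> proc \<Rightarrow> bool" where
  t_in: "trans (Sum (SChoice (SIn a P) M)) (AIn a) P"
| t_tau: "trans (Sum (SChoice (STau P) M)) ATau P"
| t_out: "trans (Out a) (AOut a) Zero"
| t_res: "trans P \<mu> Q \<Longrightarrow> a \<notin> act_names \<mu> \<Longrightarrow> trans (Res a P) \<mu> (Res a Q)"
| t_par: "trans P \<mu> Q \<Longrightarrow> trans (Par P R) \<mu> (Par Q R)"
| t_comm: "trans P (AIn a) P1 \<Longrightarrow> trans Q (AOut a) Q1 \<Longrightarrow> trans (Par P Q) ATau (Par P1 Q1)"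
| t_struct: "P \<equiv>\<^sub>s P' \<Longrightarrow> trans P' \<mu> Q' \<Longrightarrow> Q' \<equiv>\<^sub>s Q \<Longrightarrow> trans P \<mu> Q"

definition async_bisimulation :: "(proc \<Rightarrow> proc \<Rightarrow> bool) \<Rightarrow> bool" where
  "async_bisimulation R \<longleftrightarrow>
     (\<forall>P Q. R P Q \<longrightarrow> R Q P) \<and>
     (\<forall>P Q. R P Q \<longrightarrow>
        (\<forall>P'. trans P ATau P' \<longrightarrow> (\<exists>Q'. trans Q ATau Q' \<and> R P' Q')) \<and>
        (\<forall>a P'. trans P (AOut a) P' \<longrightarrow> (\<exists>Q'. trans Q (AOut a) Q' \<and> R P' Q')) \<and>
        (\<forall>a P'. trans P (AIn a) P' \<longrightarrow>
            ((\<exists>Q'. trans Q (AIn a) Q' \<and> R P' Q') \<or>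
             (\<exists>Q'. trans Q ATau Q' \<and> R P' (Par Q' (Out a))))))"

definition async_bisim :: "proc \<Rightarrow> proc \<Rightarrow> bool" where
  "async_bisim P Q \<longleftrightarrow> (\<exists>R. async_bisimulation R \<and> R P Q)"

text \<open>Labels are contexts: either the hole "-" or "- | R".\<close>
datatype ctx = Hole | HolePar proc

primrec fill :: "ctx \<Rightarrow> proc \<Rightarrow> proc" where
  "fill Hole Q = Q"
| "fill (HolePar R) Q = Par Q R"

text \<open>The process variable X_1 is Var 1.\<close>
inductive ltsA :: "proc \<Rightarrow> ctx \<Rightarrow> proc \<Rightarrow> bool" where
  A_tau: "red P Q \<Longrightarrow> ltsA P Hole Q"
| A_rcv: "P \<equiv>\<^sub>s ress A (Par (Sum (SChoice (SIn a Q) M)) R) \<Longrightarrow> a \<notin> set A \<Longrightarrow>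
          ltsA P (HolePar (Out a)) (ress A (Par Q R))"
| A_snd: "P \<equiv>\<^sub>s ress A (Par (Out a) Q) \<Longrightarrow> a \<notin> set A \<Longrightarrow>
          ltsA P (HolePar (Sum (SIn a (Var 1)))) (ress A (Par Q (Var 1)))"

text \<open>Substitution of T for X_1 (naive), together with the condition that it is
  capture-avoiding: no binder above an occurrence of X_1 binds a free name of T.\<close>
primrec subst :: "proc \<Rightarrow> proc \<Rightarrow> proc" and subst_s :: "proc \<Rightarrow> summ \<Rightarrow> summ" where
  "subst T (Sum M) = Sum (subst_s T M)"
| "subst T (Out a) = Out a"
| "subst T (Res a P) = Res a (subst T P)"
| "subst T (Par P Q) = Par (subst T P) (subst T Q)"
| "subst T (Var n) = (if n = 1 then T else Var n)"
| "subst_s T SNil = SNil"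
| "subst_s T (STau P) = STau (subst T P)"
| "subst_s T (SIn a P) = SIn a (subst T P)"
| "subst_s T (SChoice M N) = SChoice (subst_s T M) (subst_s T N)"

primrec capt_free :: "proc \<Rightarrow> name set \<Rightarrow> proc \<Rightarrow> bool"
  and capt_free_s :: "proc \<Rightarrow> name set \<Rightarrow> summ \<Rightarrow> bool" where
  "capt_free T B (Sum M) = capt_free_s T B M"
| "capt_free T B (Out a) = True"
| "capt_free T B (Res a P) = capt_free T (insert a B) P"
| "capt_free T B (Par P Q) = (capt_free T B P \<and> capt_free T B Q)"
| "capt_free T B (Var n) = (n = 1 \<longrightarrow> B \<inter> fn T = {})"
| "capt_free_s T B SNil = True"
| "capt_free_s T B (STau P) = capt_free T B P"
| "capt_free_s T B (SIn a P) = capt_free T B P"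
| "capt_free_s T B (SChoice M N) = (capt_free_s T B M \<and> capt_free_s T B N)"

primrec subst_ctx :: "proc \<Rightarrow> ctx \<Rightarrow> ctx" where
  "subst_ctx T Hole = Hole"
| "subst_ctx T (HolePar R) = HolePar (subst T R)"

primrec capt_free_ctx :: "proc \<Rightarrow> ctx \<Rightarrow> bool" where
  "capt_free_ctx T Hole = True"
| "capt_free_ctx T (HolePar R) = capt_free T {} R"

definition ltsAI :: "proc \<Rightarrow> ctx \<Rightarrow> proc \<Rightarrow> bool" where
  "ltsAI P C Q \<longleftrightarrow> (\<exists>Ce Qe T. ltsA P Ce Qe \<and> pure T \<and>
      capt_free T {} Qe \<and> capt_free_ctx T Ce \<and>
      subst T Qe \<equiv>\<^sub>s Q \<and> subst_ctx T Ce = C)"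

definition L_bisimulation :: "ctx set \<Rightarrow> (proc \<Rightarrow> proc \<Rightarrow> bool) \<Rightarrow> bool" where
  "L_bisimulation L R \<longleftrightarrow>
     (\<forall>P Q. R P Q \<longrightarrow> R Q P) \<and>
     (\<forall>P Q C P'. R P Q \<longrightarrow> ltsAI P C P' \<longrightarrow>
        (if C \<in> L then (\<exists>Q'. ltsAI Q C Q' \<and> R P' Q')
         else (\<exists>Q'. red (fill C Q) Q' \<and> R P' Q')))"

definition L_bisim :: "ctx set \<Rightarrow> proc \<Rightarrow> proc \<Rightarrow> bool" where
  "L_bisim L P Q \<longleftrightarrow> (\<exists>R. L_bisimulation L R \<and> R P Q)"

definition L_A :: "ctx set" where
  "L_A = {Hole} \<union> {HolePar (Sum (SIn a T)) | a T. pure T}"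

end

theory Submission
  imports Defs
begin

text \<open>On pure processes the transitions of \<open>A\<^sub>I\<close> are read off the ordinary LTS: label \<open>-\<close> gives
  the reductions, label \<open>- | \<bar>a\<close> the input steps on \<open>a\<close>, and label \<open>- | a.T\<close> the output steps on
  \<open>a\<close> followed by \<open>T\<close> in parallel. An \<open>L\<^sub>A\<close>-bisimulation therefore matches reductions directly and
  outputs by probing with the receiver \<open>a.0\<close>; the label \<open>- | \<bar>a\<close> lies outside \<open>L\<^sub>A\<close>, so an input of
  \<open>P\<close> must be answered by a reduction of \<open>Q | \<bar>a\<close>, which either consumes \<open>\<bar>a\<close> or leaves it
  pending after a silent step of \<open>Q\<close> -- exactly the input clause of asynchronous bisimilarity.
  Conversely, an asynchronous bisimulation answers \<open>- | a.T\<close> because asynchronous bisimilarity is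
  preserved by putting a common process in parallel.

  The ordinary LTS is closed under structural congruence by definition and so cannot be
  inverted directly; inversion goes through a syntax-directed LTS that agrees with it up to
  structural congruence.\<close>

lemmas scong_refl = scong_scong_s.refl
   and scong_sym = scong_scong_s.sym
   and scong_trans [trans] = scong_scong_s.trans
   and scong_s_refl = scong_scong_s.refl_s
   and scong_s_trans [trans] = scong_scong_s.trans_s

lemma Par_scong_left: "P \<equiv>\<^sub>s P' \<Longrightarrow> Par P Q \<equiv>\<^sub>s Par P' Q"
  by (rule scong_scong_s.cong_Par[OF _ scong_refl])

lemma Par_scong_right: "Q \<equiv>\<^sub>s Q' \<Longrightarrow> Par P Q \<equiv>\<^sub>s Par P Q'"
  by (rule scong_scong_s.cong_Par[OF scong_refl])

lemma Par_Zero_left: "Par Zero P \<equiv>\<^sub>s P"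
  by (rule scong_trans[OF scong_scong_s.par_comm scong_scong_s.par_unit])

lemma Par_left_commute: "Par P (Par Q R) \<equiv>\<^sub>s Par Q (Par P R)"
proof -
  have "Par P (Par Q R) \<equiv>\<^sub>s Par (Par P Q) R" by (rule scong_sym[OF scong_scong_s.par_assoc])
  also have "\<dots> \<equiv>\<^sub>s Par (Par Q P) R" by (rule Par_scong_left[OF scong_scong_s.par_comm])
  also have "\<dots> \<equiv>\<^sub>s Par Q (Par P R)" by (rule scong_scong_s.par_assoc)
  finally show ?thesis .
qed

lemma Par_right_commute: "Par (Par P Q) R \<equiv>\<^sub>s Par (Par P R) Q"
proof -
  have "Par (Par P Q) R \<equiv>\<^sub>s Par P (Par Q R)" by (rule scong_scong_s.par_assoc)
  also have "\<dots> \<equiv>\<^sub>s Par P (Par R Q)" by (rule Par_scong_right[OF scong_scong_s.par_comm])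
  also have "\<dots> \<equiv>\<^sub>s Par (Par P R) Q" by (rule scong_sym[OF scong_scong_s.par_assoc])
  finally show ?thesis .
qed

lemma scong_pure:
  "P \<equiv>\<^sub>s Q \<Longrightarrow> pure P = pure Q"
  "M \<equiv>\<^sub>m N \<Longrightarrow> pure_s M = pure_s N"
proof -
  have pure_swap: "pure (pswap a b P) = pure P" "pure_s (sswap a b M) = pure_s M" for a b P M
    by (induct P and M) auto
  show "P \<equiv>\<^sub>s Q \<Longrightarrow> pure P = pure Q" "M \<equiv>\<^sub>m N \<Longrightarrow> pure_s M = pure_s N"
    by (induct rule: scong_scong_s.inducts) (auto simp: pure_swap)
qed

lemma red_pure: "red P Q \<Longrightarrow> pure P \<Longrightarrow> pure Q"
  by (induct rule: red.induct) (auto simp: scong_pure)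

lemma trans_pure: "trans P \<mu> Q \<Longrightarrow> pure P \<Longrightarrow> pure Q"
  by (induct rule: trans.induct) (auto simp: scong_pure)

lemma subst_pure: "pure P \<Longrightarrow> subst T P = P" "pure_s M \<Longrightarrow> subst_s T M = M"
  by (induct P and M) auto

lemma capt_free_pure: "pure P \<Longrightarrow> capt_free T B P" "pure_s M \<Longrightarrow> capt_free_s T B M"
  by (induct P and M arbitrary: B and B) auto

lemma finite_fn: "finite (fn P)" "finite (fn_s M)"
  by (induct P and M) auto

lemma swapn_inv [simp]: "swapn a b (swapn a b c) = c"
  by (auto simp: swapn_def)

lemma swapn_inj [simp]: "swapn a b x = swapn a b y \<longleftrightarrow> x = y"
  by (metis swapn_inv)

lemma swapn_commute: "swapn a b = swapn b a"
  by (auto simp: swapn_def)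

lemma pswap_commute: "pswap a b P = pswap b a P" "sswap a b M = sswap b a M"
  by (induct P and M) (auto simp: swapn_commute)

lemma pswap_inv [simp]: "pswap a b (pswap a b P) = P" "sswap a b (sswap a b M) = M"
  by (induct P and M) auto

lemma fn_pswap: "fn (pswap a b P) = swapn a b ` fn P" "fn_s (sswap a b M) = swapn a b ` fn_s M"
  by (induct P and M) (auto simp: image_Un image_set_diff[OF inj_onI])

lemma scong_eqvt:
  "P \<equiv>\<^sub>s Q \<Longrightarrow> pswap a b P \<equiv>\<^sub>s pswap a b Q"
  "M \<equiv>\<^sub>m N \<Longrightarrow> sswap a b M \<equiv>\<^sub>m sswap a b N"
proof (induct rule: scong_scong_s.inducts)
  case (res_extr c P Q)
  then show ?case by (auto intro!: scong_scong_s.res_extr simp: fn_pswap)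
next
  case (alpha d c P)
  have pswap_swap: "pswap (swapn a b c) (swapn a b d) (pswap a b P) = pswap a b (pswap c d P)"
    "sswap (swapn a b c) (swapn a b d) (sswap a b M) = sswap a b (sswap c d M)" for P M
    by (induct P and M) (auto simp: swapn_def)
  have "swapn a b d \<notin> fn (Res (swapn a b c) (pswap a b P))"
    using alpha by (auto simp: fn_pswap)
  then have "Res (swapn a b c) (pswap a b P) \<equiv>\<^sub>s
      Res (swapn a b d) (pswap (swapn a b c) (swapn a b d) (pswap a b P))"
    by (rule scong_scong_s.alpha)
  then show ?case
    by (simp add: pswap_swap)
qed (auto intro: scong_scong_s.intros)

inductive sum_trans :: "summ \<Rightarrow> act \<Rightarrow> proc \<Rightarrow> bool" where
  sum_In: "sum_trans (SIn a P) (AIn a) P"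
| sum_Tau: "sum_trans (STau P) ATau P"
| sum_ChoiceL: "sum_trans M \<mu> P \<Longrightarrow> sum_trans (SChoice M N) \<mu> P"
| sum_ChoiceR: "sum_trans N \<mu> P \<Longrightarrow> sum_trans (SChoice M N) \<mu> P"

inductive syn_trans :: "proc \<Rightarrow> act \<Rightarrow> proc \<Rightarrow> bool" where
  syn_Sum: "sum_trans M \<mu> P \<Longrightarrow> syn_trans (Sum M) \<mu> P"
| syn_Out: "syn_trans (Out a) (AOut a) Zero"
| syn_Res: "syn_trans P \<mu> Q \<Longrightarrow> a \<notin> act_names \<mu> \<Longrightarrow> syn_trans (Res a P) \<mu> (Res a Q)"
| syn_ParL: "syn_trans P \<mu> Q \<Longrightarrow> syn_trans (Par P R) \<mu> (Par Q R)"
| syn_ParR: "syn_trans R \<mu> S \<Longrightarrow> syn_trans (Par P R) \<mu> (Par P S)"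
| syn_CommL: "syn_trans P (AIn a) P1 \<Longrightarrow> syn_trans Q (AOut a) Q1 \<Longrightarrow> syn_trans (Par P Q) ATau (Par P1 Q1)"
| syn_CommR: "syn_trans P (AOut a) P1 \<Longrightarrow> syn_trans Q (AIn a) Q1 \<Longrightarrow> syn_trans (Par P Q) ATau (Par P1 Q1)"

inductive_cases syn_SumE: "syn_trans (Sum M) \<mu> P"
inductive_cases syn_OutE: "syn_trans (Out a) \<mu> P"
inductive_cases syn_ResE: "syn_trans (Res a P) \<mu> Q"
inductive_cases syn_ParE: "syn_trans (Par P Q) \<mu> R"
inductive_cases sum_trans_SNilE: "sum_trans SNil \<mu> P"
inductive_cases sum_trans_TauE: "sum_trans (STau P) \<mu> Q"
inductive_cases sum_trans_InE: "sum_trans (SIn a P) \<mu> Q"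
inductive_cases sum_trans_ChoiceE: "sum_trans (SChoice M N) \<mu> Q"

lemma syn_trans_fn: "syn_trans P \<mu> Q \<Longrightarrow> fn Q \<subseteq> fn P \<and> act_names \<mu> \<subseteq> fn P"
proof -
  have sum_trans_fn: "sum_trans M \<mu> Q \<Longrightarrow> fn Q \<subseteq> fn_s M \<and> act_names \<mu> \<subseteq> fn_s M" for M \<mu> Q
    by (induct rule: sum_trans.induct) auto
  show "syn_trans P \<mu> Q \<Longrightarrow> fn Q \<subseteq> fn P \<and> act_names \<mu> \<subseteq> fn P"
    by (induct rule: syn_trans.induct) (auto dest: sum_trans_fn)
qed

primrec aswap :: "name \<Rightarrow> name \<Rightarrow> act \<Rightarrow> act" where
  "aswap a b ATau = ATau"
| "aswap a b (AIn c) = AIn (swapn a b c)"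
| "aswap a b (AOut c) = AOut (swapn a b c)"

lemma aswap_fresh: "a \<notin> act_names \<mu> \<Longrightarrow> b \<notin> act_names \<mu> \<Longrightarrow> aswap a b \<mu> = \<mu>"
  by (cases \<mu>) (auto simp: swapn_def)

lemma syn_trans_eqvt: "syn_trans P \<mu> Q \<Longrightarrow> syn_trans (pswap a b P) (aswap a b \<mu>) (pswap a b Q)"
proof -
  have sum_trans_eqvt: "sum_trans M \<mu> Q \<Longrightarrow> sum_trans (sswap a b M) (aswap a b \<mu>) (pswap a b Q)" for M \<mu> Q
    by (induct rule: sum_trans.induct) (auto intro: sum_trans.intros)
  have act_names_aswap: "act_names (aswap a b \<mu>) = swapn a b ` act_names \<mu>" for \<mu>
    by (cases \<mu>) auto
  show "syn_trans P \<mu> Q \<Longrightarrow> syn_trans (pswap a b P) (aswap a b \<mu>) (pswap a b Q)"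
  proof (induct rule: syn_trans.induct)
    case (syn_Res P \<mu> Q c)
    then show ?case by (auto intro!: syn_trans.syn_Res simp: act_names_aswap)
  qed (auto intro: syn_trans.intros sum_trans_eqvt)
qed

definition syn_sim :: "proc \<Rightarrow> proc \<Rightarrow> bool" where
  "syn_sim P Q \<longleftrightarrow> (\<forall>\<mu> P'. syn_trans P \<mu> P' \<longrightarrow> (\<exists>Q'. syn_trans Q \<mu> Q' \<and> P' \<equiv>\<^sub>s Q'))"

definition sum_sim :: "summ \<Rightarrow> summ \<Rightarrow> bool" where
  "sum_sim M N \<longleftrightarrow> (\<forall>\<mu> P'. sum_trans M \<mu> P' \<longrightarrow> (\<exists>Q'. sum_trans N \<mu> Q' \<and> P' \<equiv>\<^sub>s Q'))"

lemma syn_sim_trans: "syn_sim P Q \<Longrightarrow> syn_sim Q R \<Longrightarrow> syn_sim P R"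
  unfolding syn_sim_def by (meson scong_trans)

lemma sum_sim_trans: "sum_sim M N \<Longrightarrow> sum_sim N K \<Longrightarrow> sum_sim M K"
  unfolding sum_sim_def by (meson scong_trans)

lemma syn_sim_Par:
  assumes "syn_sim P Q" "syn_sim R S" "P \<equiv>\<^sub>s Q" "R \<equiv>\<^sub>s S"
  shows "syn_sim (Par P R) (Par Q S)"
  unfolding syn_sim_def
proof (intro allI impI)
  fix \<mu> X assume "syn_trans (Par P R) \<mu> X"
  then show "\<exists>Y. syn_trans (Par Q S) \<mu> Y \<and> X \<equiv>\<^sub>s Y"
    using assms unfolding syn_sim_def
    by cases (meson scong_scong_s.cong_Par syn_trans.intros)+
qed

lemma syn_sim_Par_assoc:
  "syn_sim (Par (Par P Q) R) (Par P (Par Q R))"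
  "syn_sim (Par P (Par Q R)) (Par (Par P Q) R)"
  unfolding syn_sim_def
  by (blast elim!: syn_ParE intro: syn_trans.intros scong_scong_s.par_assoc scong_sym)+

lemma syn_sim_Res_extr:
  assumes "a \<notin> fn P"
  shows "syn_sim (Res a (Par P Q)) (Par P (Res a Q))"
    and "syn_sim (Par P (Res a Q)) (Res a (Par P Q))"
proof -
  have "\<exists>Y. syn_trans (Par P (Res a Q)) \<mu> Y \<and> X \<equiv>\<^sub>s Y"
    if "syn_trans (Res a (Par P Q)) \<mu> X" for \<mu> X
    using that assms
    by (elim syn_ResE syn_ParE) (frule syn_trans_fn; fastforce intro: syn_trans.intros scong_scong_s.res_extr)+
  then show "syn_sim (Res a (Par P Q)) (Par P (Res a Q))"
    unfolding syn_sim_def by blast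
  have "\<exists>Y. syn_trans (Res a (Par P Q)) \<mu> Y \<and> X \<equiv>\<^sub>s Y"
    if "syn_trans (Par P (Res a Q)) \<mu> X" for \<mu> X
    using that assms
    by (elim syn_ResE syn_ParE)
      (frule syn_trans_fn; fastforce intro: syn_trans.intros scong_sym[OF scong_scong_s.res_extr])+
  then show "syn_sim (Par P (Res a Q)) (Res a (Par P Q))"
    unfolding syn_sim_def by blast
qed

lemma syn_sim_Res_alpha:
  assumes fresh: "b \<notin> fn (Res a P)"
  shows "syn_sim (Res a P) (Res b (pswap a b P))"
  unfolding syn_sim_def
proof (intro allI impI)
  fix \<mu> X assume "syn_trans (Res a P) \<mu> X"
  then obtain Y where X: "X = Res a Y" and Y: "syn_trans P \<mu> Y" and a: "a \<notin> act_names \<mu>"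
    by (rule syn_ResE)
  have fn_Y: "fn Y \<subseteq> fn P" and names: "act_names \<mu> \<subseteq> fn P"
    using syn_trans_fn[OF Y] by auto
  have b: "b \<notin> act_names \<mu>"
    using fresh names a by auto
  have "syn_trans (pswap a b P) \<mu> (pswap a b Y)"
    using syn_trans_eqvt[OF Y, of a b] aswap_fresh[OF a b] by simp
  then have "syn_trans (Res b (pswap a b P)) \<mu> (Res b (pswap a b Y))"
    using b by (rule syn_Res)
  moreover have "Res a Y \<equiv>\<^sub>s Res b (pswap a b Y)"
    using fresh fn_Y by (intro scong_scong_s.alpha) auto
  ultimately show "\<exists>Z. syn_trans (Res b (pswap a b P)) \<mu> Z \<and> X \<equiv>\<^sub>s Z"
    unfolding X by blast
qed

lemma fresh_Res_alpha:
  assumes "b \<notin> fn (Res a P)"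
  shows "a \<notin> fn (Res b (pswap a b P))"
  using assms by (auto simp: fn_pswap swapn_def)

lemma scong_syn_sim:
  "P \<equiv>\<^sub>s Q \<Longrightarrow> syn_sim P Q \<and> syn_sim Q P"
  "M \<equiv>\<^sub>m N \<Longrightarrow> sum_sim M N \<and> sum_sim N M"
proof (induct rule: scong_scong_s.inducts)
  case (trans P Q R) then show ?case using syn_sim_trans by blast
next
  case (trans_s M N K) then show ?case using sum_sim_trans by blast
next
  case (cong_Sum M N) then show ?case
    unfolding syn_sim_def sum_sim_def by (meson syn_Sum syn_SumE)
next
  case (cong_Res P Q a) then show ?case
    unfolding syn_sim_def by (fastforce elim!: syn_ResE intro: syn_Res scong_scong_s.cong_Res)
next
  case (cong_Par P P' Q Q') then show ?case
    using syn_sim_Par scong_sym by blast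
next
  case (cong_Choice M M' N N') then show ?case
    unfolding sum_sim_def by (fastforce elim!: sum_trans_ChoiceE intro: sum_trans.intros)
next
  case (par_assoc P Q R) then show ?case
    using syn_sim_Par_assoc by blast
next
  case (res_extr a P Q) then show ?case
    using syn_sim_Res_extr by blast
next
  case (alpha b a P)
  have "syn_sim (Res b (pswap a b P)) (Res a (pswap b a (pswap a b P)))"
    using syn_sim_Res_alpha[OF fresh_Res_alpha[OF alpha]] .
  then show ?case
    using syn_sim_Res_alpha[OF alpha] by (simp add: pswap_commute[of b a])
qed (auto simp: syn_sim_def sum_sim_def elim!: syn_ParE syn_SumE syn_ResE syn_OutE
    sum_trans_SNilE sum_trans_TauE sum_trans_InE sum_trans_ChoiceE
    intro: scong_scong_s.intros syn_trans.intros sum_trans.intros)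

lemma sum_trans_choice_form:
  "sum_trans M \<mu> P \<Longrightarrow>
     (\<exists>a M'. \<mu> = AIn a \<and> M \<equiv>\<^sub>m SChoice (SIn a P) M') \<or> (\<exists>M'. \<mu> = ATau \<and> M \<equiv>\<^sub>m SChoice (STau P) M')"
proof (induct rule: sum_trans.induct)
  case (sum_In a P) then show ?case
    using scong_scong_s.sym_s[OF scong_scong_s.choice_unit] by blast
next
  case (sum_Tau P) then show ?case
    using scong_scong_s.sym_s[OF scong_scong_s.choice_unit] by blast
next
  case (sum_ChoiceL M \<mu> P N)
  have "SChoice M N \<equiv>\<^sub>m SChoice X (SChoice M' N')"
    if "M \<equiv>\<^sub>m SChoice X M'" and "N \<equiv>\<^sub>m N'" for X M' N'
  proof -
    have "SChoice M N \<equiv>\<^sub>m SChoice (SChoice X M') N'"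
      using that by (rule scong_scong_s.cong_Choice)
    also have "\<dots> \<equiv>\<^sub>m SChoice X (SChoice M' N')"
      by (rule scong_scong_s.choice_assoc)
    finally show ?thesis .
  qed
  then show ?case
    using sum_ChoiceL scong_s_refl by metis
next
  case (sum_ChoiceR N \<mu> P M)
  have "SChoice M N \<equiv>\<^sub>m SChoice X (SChoice M' M)"
    if "N \<equiv>\<^sub>m SChoice X M'" for X M'
  proof -
    have "SChoice M N \<equiv>\<^sub>m SChoice N M"
      by (rule scong_scong_s.choice_comm)
    also have "\<dots> \<equiv>\<^sub>m SChoice (SChoice X M') M"
      using that scong_s_refl by (rule scong_scong_s.cong_Choice)
    also have "\<dots> \<equiv>\<^sub>m SChoice X (SChoice M' M)"
      by (rule scong_scong_s.choice_assoc)
    finally show ?thesis .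
  qed
  then show ?case
    using sum_ChoiceR by metis
qed

lemma syn_trans_imp_trans: "syn_trans P \<mu> Q \<Longrightarrow> trans P \<mu> Q"
proof (induct rule: syn_trans.induct)
  case (syn_Sum M \<mu> P)
  from sum_trans_choice_form[OF this] show ?case
    by (metis scong_refl scong_scong_s.cong_Sum t_in t_struct t_tau)
next
  case (syn_ParR R \<mu> S P) then show ?case
    by (meson scong_scong_s.par_comm t_par t_struct)
next
  case (syn_CommR P a P1 Q Q1) then show ?case
    by (meson scong_scong_s.par_comm t_comm t_struct)
qed (auto intro: t_out t_res t_par t_comm)

lemma trans_imp_syn_trans: "trans P \<mu> Q \<Longrightarrow> \<exists>Q'. syn_trans P \<mu> Q' \<and> Q' \<equiv>\<^sub>s Q"
proof (induct rule: trans.induct)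
  case (t_in a P M) then show ?case by (meson sum_In sum_ChoiceL scong_refl syn_Sum)
next
  case (t_tau P M) then show ?case by (meson sum_Tau sum_ChoiceL scong_refl syn_Sum)
next
  case (t_struct P P' \<mu> Q' Q)
  then obtain X where "syn_trans P' \<mu> X" "X \<equiv>\<^sub>s Q'" by blast
  moreover obtain Y where "syn_trans P \<mu> Y" "Y \<equiv>\<^sub>s X"
    using scong_syn_sim(1)[OF t_struct(1)] calculation(1) unfolding syn_sim_def
    by (meson scong_sym)
  ultimately show ?case using t_struct(4) by (meson scong_trans)
qed (meson syn_trans.intros scong_scong_s.intros)+

lemma syn_trans_Out_inv: "syn_trans Q (AOut a) Q1 \<Longrightarrow> Q \<equiv>\<^sub>s Par (Out a) Q1"
proof (induct Q "AOut a" Q1 rule: syn_trans.induct)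
  case (syn_Sum M P) then show ?case using sum_trans_choice_form by blast
next
  case syn_Out then show ?case
    using scong_sym[OF scong_scong_s.par_unit] by blast
next
  case (syn_Res P Q b)
  then have "Res b P \<equiv>\<^sub>s Res b (Par (Out a) Q)" by (simp add: scong_scong_s.cong_Res)
  also have "\<dots> \<equiv>\<^sub>s Par (Out a) (Res b Q)" using syn_Res by (intro scong_scong_s.res_extr) auto
  finally show ?case .
next
  case (syn_ParL P Q R)
  then have "Par P R \<equiv>\<^sub>s Par (Par (Out a) Q) R" by (simp add: Par_scong_left)
  also have "\<dots> \<equiv>\<^sub>s Par (Out a) (Par Q R)" by (rule scong_scong_s.par_assoc)
  finally show ?case .
next
  case (syn_ParR R S P)
  then have "Par P R \<equiv>\<^sub>s Par P (Par (Out a) S)" by (simp add: Par_scong_right)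
  also have "\<dots> \<equiv>\<^sub>s Par (Out a) (Par P S)" by (rule Par_left_commute)
  finally show ?case .
qed

lemma red_scong_left: "P \<equiv>\<^sub>s P' \<Longrightarrow> red P' Q \<Longrightarrow> red P Q"
  by (rule red.struct[OF _ _ scong_refl])

lemma red_scong_right: "red P Q' \<Longrightarrow> Q' \<equiv>\<^sub>s Q \<Longrightarrow> red P Q"
  by (rule red.struct[OF scong_refl])

lemma syn_trans_In_red: "syn_trans P (AIn a) P1 \<Longrightarrow> red (Par P (Out a)) P1"
proof (induct P "AIn a" P1 rule: syn_trans.induct)
  case (syn_Sum M P)
  then obtain M' where "M \<equiv>\<^sub>m SChoice (SIn a P) M'" using sum_trans_choice_form by blast
  then have "Par (Sum M) (Out a) \<equiv>\<^sub>s Par (Sum (SChoice (SIn a P) M')) (Out a)"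
    by (intro Par_scong_left scong_scong_s.cong_Sum)
  then show ?case using red.comm by (rule red_scong_left)
next
  case (syn_Res P Q b)
  have "Par (Res b P) (Out a) \<equiv>\<^sub>s Par (Out a) (Res b P)" by (rule scong_scong_s.par_comm)
  also have "\<dots> \<equiv>\<^sub>s Res b (Par (Out a) P)"
    using syn_Res by (intro scong_sym[OF scong_scong_s.res_extr]) auto
  also have "\<dots> \<equiv>\<^sub>s Res b (Par P (Out a))" by (rule scong_scong_s.cong_Res[OF scong_scong_s.par_comm])
  finally show ?case using red.res[OF syn_Res(2)] by (rule red_scong_left)
next
  case (syn_ParL P Q R)
  show ?case using Par_right_commute red.par[OF syn_ParL(2)] by (rule red_scong_left)
next
  case (syn_ParR R S P)
  have "Par (Par P R) (Out a) \<equiv>\<^sub>s Par (Par R P) (Out a)"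
    by (rule Par_scong_left[OF scong_scong_s.par_comm])
  also have "\<dots> \<equiv>\<^sub>s Par (Par R (Out a)) P" by (rule Par_right_commute)
  finally show ?case
    using red.par[OF syn_ParR(2)] scong_scong_s.par_comm by (rule red.struct)
qed

lemma syn_trans_Tau_red: "syn_trans P ATau Q \<Longrightarrow> red P Q"
proof (induct P ATau Q rule: syn_trans.induct)
  case (syn_Sum M P)
  then obtain M' where "M \<equiv>\<^sub>m SChoice (STau P) M'" using sum_trans_choice_form by blast
  then show ?case by (rule red_scong_left[OF scong_scong_s.cong_Sum red.tau])
next
  case (syn_Res P Q a) show ?case using syn_Res(2) by (rule red.res)
next
  case (syn_ParL P Q R) show ?case using syn_ParL(2) by (rule red.par)
next
  case (syn_ParR R S P) show ?case
    using scong_scong_s.par_comm red.par[OF syn_ParR(2)] scong_scong_s.par_comm by (rule red.struct)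
next
  case (syn_CommL P a P1 Q Q1)
  have "Par P Q \<equiv>\<^sub>s Par P (Par (Out a) Q1)"
    using syn_trans_Out_inv[OF syn_CommL(2)] by (rule Par_scong_right)
  also have "\<dots> \<equiv>\<^sub>s Par (Par P (Out a)) Q1" by (rule scong_sym[OF scong_scong_s.par_assoc])
  finally show ?case using red.par[OF syn_trans_In_red[OF syn_CommL(1)]] by (rule red_scong_left)
next
  case (syn_CommR P a P1 Q Q1)
  have "Par P Q \<equiv>\<^sub>s Par (Par (Out a) P1) Q"
    using syn_trans_Out_inv[OF syn_CommR(1)] by (rule Par_scong_left)
  also have "\<dots> \<equiv>\<^sub>s Par Q (Par (Out a) P1)" by (rule scong_scong_s.par_comm)
  also have "\<dots> \<equiv>\<^sub>s Par (Par Q (Out a)) P1" by (rule scong_sym[OF scong_scong_s.par_assoc])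
  finally show ?case
    using red.par[OF syn_trans_In_red[OF syn_CommR(2)]] scong_scong_s.par_comm by (rule red.struct)
qed

lemma red_imp_trans: "red P Q \<Longrightarrow> trans P ATau Q"
proof (induct rule: red.induct)
  case (comm a P M)
  show ?case using t_comm[OF t_in t_out] scong_scong_s.par_unit by (rule t_struct[OF scong_refl])
next
  case (tau P M) show ?case by (rule t_tau)
next
  case (res P Q a) then show ?case by (simp add: t_res)
next
  case (par P Q R) then show ?case by (blast intro: t_par)
next
  case (struct P P' Q' Q) show ?case using struct(1,3,4) by (rule t_struct)
qed

lemma red_iff_trans_Tau: "red P Q \<longleftrightarrow> trans P ATau Q"
proof
  assume "trans P ATau Q"
  then obtain Q' where "syn_trans P ATau Q'" and "Q' \<equiv>\<^sub>s Q"
    using trans_imp_syn_trans by blast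
  then show "red P Q" using syn_trans_Tau_red red_scong_right by blast
qed (rule red_imp_trans)

lemma trans_scong_left: "P \<equiv>\<^sub>s P0 \<Longrightarrow> trans P0 \<mu> P' \<Longrightarrow> trans P \<mu> P'"
  by (rule t_struct[OF _ _ scong_refl])

lemma trans_scong_right: "trans P \<mu> P' \<Longrightarrow> P' \<equiv>\<^sub>s P'' \<Longrightarrow> trans P \<mu> P''"
  by (rule t_struct[OF scong_refl])

lemma trans_ParR: "trans T \<mu> T' \<Longrightarrow> trans (Par X T) \<mu> (Par X T')"
  using scong_scong_s.par_comm t_par scong_scong_s.par_comm by (rule t_struct)

lemma trans_CommR:
  "trans X (AOut a) X' \<Longrightarrow> trans T (AIn a) T' \<Longrightarrow> trans (Par X T) ATau (Par X' T')"
  using scong_scong_s.par_comm t_comm scong_scong_s.par_comm by (rule t_struct)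

lemma trans_Out_inv: "trans T (AOut a) T' \<Longrightarrow> T \<equiv>\<^sub>s Par (Out a) T'"
proof -
  assume "trans T (AOut a) T'"
  then obtain Z where "syn_trans T (AOut a) Z" and "Z \<equiv>\<^sub>s T'"
    using trans_imp_syn_trans by blast
  then show ?thesis
    using syn_trans_Out_inv Par_scong_right scong_trans by blast
qed

lemma trans_OutE:
  assumes "trans (Out a) \<mu> T"
  obtains "\<mu> = AOut a" and "T \<equiv>\<^sub>s Zero"
proof -
  from trans_imp_syn_trans[OF assms] obtain Z where "syn_trans (Out a) \<mu> Z" and "Z \<equiv>\<^sub>s T"
    by blast
  then show ?thesis using that scong_sym by (auto elim: syn_OutE)
qed

lemma trans_ParE:
  assumes "trans (Par X T) \<mu> W"
  obtains (left) X' where "trans X \<mu> X'" and "W \<equiv>\<^sub>s Par X' T"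
    | (right) T' where "trans T \<mu> T'" and "W \<equiv>\<^sub>s Par X T'"
    | (comm_left) a X' T' where "\<mu> = ATau" and "trans X (AIn a) X'" and "trans T (AOut a) T'"
        and "W \<equiv>\<^sub>s Par X' T'"
    | (comm_right) a X' T' where "\<mu> = ATau" and "trans X (AOut a) X'" and "trans T (AIn a) T'"
        and "W \<equiv>\<^sub>s Par X' T'"
proof -
  from trans_imp_syn_trans[OF assms] obtain Z where Z: "syn_trans (Par X T) \<mu> Z" and W: "W \<equiv>\<^sub>s Z"
    using scong_sym by blast
  from Z show ?thesis
    by (rule syn_ParE) (use W in \<open>auto intro: left right comm_left comm_right syn_trans_imp_trans\<close>)
qed

lemma ress_simps [simp]: "ress [] P = P" "ress (a # A) P = Res a (ress A P)"
  by (simp_all add: ress_def)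

lemma fn_ress [simp]: "fn (ress A P) = fn P - set A"
  by (induct A) auto

lemma pure_ress [simp]: "pure (ress A P) = pure P"
  by (induct A) auto

lemma subst_ress [simp]: "subst T (ress A P) = ress A (subst T P)"
  by (induct A) auto

lemma capt_free_ress [simp]: "capt_free T B (ress A P) = capt_free T (B \<union> set A) P"
  by (induct A arbitrary: B) auto

lemma pswap_ress: "a \<notin> set A \<Longrightarrow> b \<notin> set A \<Longrightarrow> pswap a b (ress A P) = ress A (pswap a b P)"
  by (induct A) (auto simp: swapn_def)

lemma ress_scong: "P \<equiv>\<^sub>s Q \<Longrightarrow> ress A P \<equiv>\<^sub>s ress A Q"
  by (induct A) (auto intro: scong_scong_s.cong_Res)

lemma syn_trans_ress:
  "syn_trans P \<mu> Q \<Longrightarrow> set A \<inter> act_names \<mu> = {} \<Longrightarrow> syn_trans (ress A P) \<mu> (ress A Q)"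
  by (induct A) (auto intro: syn_Res)

lemma ress_Par_extr: "set A \<inter> fn T = {} \<Longrightarrow> ress A (Par X T) \<equiv>\<^sub>s Par (ress A X) T"
proof (induct A)
  case Nil then show ?case by (simp add: scong_refl)
next
  case (Cons b A)
  then have "Res b (ress A (Par X T)) \<equiv>\<^sub>s Res b (Par (ress A X) T)"
    by (simp add: scong_scong_s.cong_Res)
  also have "\<dots> \<equiv>\<^sub>s Res b (Par T (ress A X))" by (rule scong_scong_s.cong_Res[OF scong_scong_s.par_comm])
  also have "\<dots> \<equiv>\<^sub>s Par T (Res b (ress A X))" using Cons by (intro scong_scong_s.res_extr) auto
  also have "\<dots> \<equiv>\<^sub>s Par (Res b (ress A X)) T" by (rule scong_scong_s.par_comm)
  finally show ?case by simp
qed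

lemma ress_Par_right:
  assumes "R \<equiv>\<^sub>s ress A (Par S R0)" and "set A \<inter> fn Q = {}"
  shows "Par R Q \<equiv>\<^sub>s ress A (Par S (Par R0 Q))"
proof -
  have "Par R Q \<equiv>\<^sub>s Par (ress A (Par S R0)) Q" using assms(1) by (rule Par_scong_left)
  also have "\<dots> \<equiv>\<^sub>s ress A (Par (Par S R0) Q)" by (rule scong_sym[OF ress_Par_extr[OF assms(2)]])
  also have "\<dots> \<equiv>\<^sub>s ress A (Par S (Par R0 Q))" by (rule ress_scong[OF scong_scong_s.par_assoc])
  finally show ?thesis .
qed

text \<open>The premise of rule (Rcv) of \<open>A\<close>, with the restricted names outside \<open>F\<close>.\<close>
definition rcv_form :: "name \<Rightarrow> name set \<Rightarrow> proc \<Rightarrow> proc \<Rightarrow> bool" where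
  "rcv_form a F P P1 \<longleftrightarrow> (\<exists>A M R P0. P \<equiv>\<^sub>s ress A (Par (Sum (SChoice (SIn a P0) M)) R) \<and>
     P1 \<equiv>\<^sub>s ress A (Par P0 R) \<and> a \<notin> set A \<and> set A \<inter> F = {})"

lemma rcv_form_intro:
  "P \<equiv>\<^sub>s ress A (Par (Sum (SChoice (SIn a P0) M)) R) \<Longrightarrow> P1 \<equiv>\<^sub>s ress A (Par P0 R) \<Longrightarrow>
    a \<notin> set A \<Longrightarrow> set A \<inter> F = {} \<Longrightarrow> rcv_form a F P P1"
  unfolding rcv_form_def by blast

lemma rcv_formE:
  assumes "rcv_form a F P P1"
  obtains A M R P0 where "P \<equiv>\<^sub>s ress A (Par (Sum (SChoice (SIn a P0) M)) R)"
    and "P1 \<equiv>\<^sub>s ress A (Par P0 R)" and "a \<notin> set A" and "set A \<inter> F = {}"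
  using assms unfolding rcv_form_def by blast

lemma rcv_form_scong:
  assumes "P \<equiv>\<^sub>s P'" and "P1 \<equiv>\<^sub>s P1'" and "rcv_form a F P' P1'"
  shows "rcv_form a F P P1"
  using assms(3) by (rule rcv_formE) (blast intro: rcv_form_intro scong_trans[OF assms(1)] scong_trans[OF assms(2)])

lemma rcv_form_Par:
  assumes "rcv_form a (F \<union> fn R) P P1"
  shows "rcv_form a F (Par P R) (Par P1 R)"
proof -
  obtain A M R0 P0 where "P \<equiv>\<^sub>s ress A (Par (Sum (SChoice (SIn a P0) M)) R0)" "P1 \<equiv>\<^sub>s ress A (Par P0 R0)"
      "a \<notin> set A" and A: "set A \<inter> (F \<union> fn R) = {}"
    using assms by (rule rcv_formE)
  moreover have "set A \<inter> fn R = {}" and "set A \<inter> F = {}" using A by auto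
  ultimately show ?thesis by (blast intro: rcv_form_intro ress_Par_right)
qed

text \<open>The bound name \<open>b\<close> is first renamed to a name \<open>c\<close> outside \<open>F\<close>, so that it can join the
  restricted names of the normal form.\<close>
lemma rcv_form_Res:
  assumes nf: "rcv_form a (F \<union> {b, c}) P P1"
    and c: "c \<notin> F \<union> {a} \<union> fn (Res b P) \<union> fn (Res b P1)" and "b \<noteq> a"
  shows "rcv_form a F (Res b P) (Res b P1)"
proof -
  obtain A M R P0 where P: "P \<equiv>\<^sub>s ress A (Par (Sum (SChoice (SIn a P0) M)) R)"
      and P1: "P1 \<equiv>\<^sub>s ress A (Par P0 R)" and "a \<notin> set A" and A: "set A \<inter> (F \<union> {b, c}) = {}"
    using nf by (rule rcv_formE)
  have swap_a: "swapn b c a = a" using \<open>b \<noteq> a\<close> c by (auto simp: swapn_def)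
  have "Res b P \<equiv>\<^sub>s Res c (pswap b c P)" using c by (intro scong_scong_s.alpha) auto
  also have "\<dots> \<equiv>\<^sub>s Res c (pswap b c (ress A (Par (Sum (SChoice (SIn a P0) M)) R)))"
    by (rule scong_scong_s.cong_Res[OF scong_eqvt(1)[OF P]])
  also have "\<dots> = ress (c # A) (Par (Sum (SChoice (SIn a (pswap b c P0)) (sswap b c M))) (pswap b c R))"
    using A swap_a by (simp add: pswap_ress)
  finally have P_nf: "Res b P \<equiv>\<^sub>s \<dots>" .
  have "Res b P1 \<equiv>\<^sub>s Res c (pswap b c P1)" using c by (intro scong_scong_s.alpha) auto
  also have "\<dots> \<equiv>\<^sub>s Res c (pswap b c (ress A (Par P0 R)))"
    by (rule scong_scong_s.cong_Res[OF scong_eqvt(1)[OF P1]])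
  also have "\<dots> = ress (c # A) (Par (pswap b c P0) (pswap b c R))"
    using A by (simp add: pswap_ress)
  finally have P1_nf: "Res b P1 \<equiv>\<^sub>s \<dots>" .
  have "a \<notin> set (c # A)" and "set (c # A) \<inter> F = {}" using \<open>a \<notin> set A\<close> A c by auto
  with P_nf P1_nf show ?thesis by (rule rcv_form_intro)
qed

lemma syn_trans_rcv_form: "syn_trans P (AIn a) P1 \<Longrightarrow> finite F \<Longrightarrow> rcv_form a F P P1"
proof (induct P "AIn a" P1 arbitrary: F rule: syn_trans.induct)
  case (syn_Sum M P)
  then obtain M' where "M \<equiv>\<^sub>m SChoice (SIn a P) M'" using sum_trans_choice_form by blast
  then have "Sum M \<equiv>\<^sub>s Sum (SChoice (SIn a P) M')" by (rule scong_scong_s.cong_Sum)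
  also have "\<dots> \<equiv>\<^sub>s Par (Sum (SChoice (SIn a P) M')) Zero" by (rule scong_sym[OF scong_scong_s.par_unit])
  finally show ?case
    using rcv_form_intro[of "Sum M" "[]"] scong_sym[OF scong_scong_s.par_unit] by simp
next
  case (syn_Res P Q b)
  have "finite (F \<union> {a} \<union> fn (Res b P) \<union> fn (Res b Q))" using syn_Res(4) finite_fn by simp
  from ex_new_if_finite[OF infinite_UNIV_nat this]
  obtain c where c: "c \<notin> F \<union> {a} \<union> fn (Res b P) \<union> fn (Res b Q)" ..
  have "rcv_form a (F \<union> {b, c}) P Q" using syn_Res(2,4) by simp
  moreover have "b \<noteq> a" using syn_Res(3) by simp
  ultimately show ?case by (rule rcv_form_Res[OF _ c])
next
  case (syn_ParL P Q R)
  have "rcv_form a (F \<union> fn R) P Q" using syn_ParL(2,3) finite_fn by simp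
  then show ?case by (rule rcv_form_Par)
next
  case (syn_ParR R S P)
  have "rcv_form a (F \<union> fn P) R S" using syn_ParR(2,3) finite_fn by simp
  then have "rcv_form a F (Par R P) (Par S P)" by (rule rcv_form_Par)
  with scong_scong_s.par_comm scong_scong_s.par_comm show ?case by (rule rcv_form_scong)
qed

lemma ltsA_labels:
  "ltsA P C Q \<Longrightarrow> C = Hole \<or> (\<exists>a. C = HolePar (Out a)) \<or> (\<exists>a. C = HolePar (Sum (SIn a (Var 1))))"
  by (induct rule: ltsA.induct) auto

lemma ltsAI_labels:
  "ltsAI P C P' \<Longrightarrow> C = Hole \<or> (\<exists>a. C = HolePar (Out a)) \<or> (\<exists>a T. pure T \<and> C = HolePar (Sum (SIn a T)))"
  unfolding ltsAI_def by (auto dest!: ltsA_labels)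

lemma ltsAI_scong_left: "P \<equiv>\<^sub>s P0 \<Longrightarrow> ltsAI P0 C P' \<Longrightarrow> ltsAI P C P'"
proof -
  have "ltsA P C Q" if "P \<equiv>\<^sub>s P0" and "ltsA P0 C Q" for C Q
    using that(2)
  proof cases
    case A_tau then show ?thesis using that(1) by (blast intro: ltsA.A_tau red_scong_left)
  next
    case A_rcv then show ?thesis using that(1) by (metis ltsA.A_rcv scong_trans)
  next
    case A_snd then show ?thesis using that(1) by (metis ltsA.A_snd scong_trans)
  qed
  then show "P \<equiv>\<^sub>s P0 \<Longrightarrow> ltsAI P0 C P' \<Longrightarrow> ltsAI P C P'"
    unfolding ltsAI_def by blast
qed

lemma ltsA_imp_ltsAI:
  assumes "ltsA P C Q" and "pure Q" and "\<And>R. C = HolePar R \<Longrightarrow> pure R" and "Q \<equiv>\<^sub>s Q'"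
  shows "ltsAI P C Q'"
proof -
  have "capt_free_ctx Zero C \<and> subst_ctx Zero C = C"
    using assms(3) by (cases C) (auto simp: capt_free_pure subst_pure)
  then show ?thesis
    unfolding ltsAI_def using assms(1,2,4)
    by (intro exI[of _ C] exI[of _ Q] exI[of _ Zero]) (simp add: capt_free_pure subst_pure)
qed

lemma ltsAI_Hole_iff:
  assumes "pure P"
  shows "ltsAI P Hole P' \<longleftrightarrow> red P P'"
proof
  assume "ltsAI P Hole P'"
  then obtain Ce Qe T where l: "ltsA P Ce Qe" and Qe: "subst T Qe \<equiv>\<^sub>s P'" and "subst_ctx T Ce = Hole"
    unfolding ltsAI_def by blast
  then have "Ce = Hole" by (cases Ce) auto
  with l have r: "red P Qe" by cases auto
  then have "subst T Qe = Qe" using red_pure assms subst_pure by blast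
  then show "red P P'" using red_scong_right[OF r] Qe by simp
next
  assume r: "red P P'"
  then show "ltsAI P Hole P'"
    using ltsA_imp_ltsAI[OF A_tau[OF r] red_pure[OF r assms]] scong_refl by auto
qed

lemma ltsAI_Out_iff:
  assumes "pure P"
  shows "ltsAI P (HolePar (Out a)) P' \<longleftrightarrow> trans P (AIn a) P'"
proof
  assume "ltsAI P (HolePar (Out a)) P'"
  then obtain Ce Qe T where l: "ltsA P Ce Qe" and Qe: "subst T Qe \<equiv>\<^sub>s P'"
      and C: "subst_ctx T Ce = HolePar (Out a)"
    unfolding ltsAI_def by blast
  from l show "trans P (AIn a) P'"
  proof cases
    case (A_rcv A b Q M R)
    have "pure (ress A (Par (Sum (SChoice (SIn b Q) M)) R))"
      using \<open>P \<equiv>\<^sub>s ress A (Par (Sum (SChoice (SIn b Q) M)) R)\<close> assms scong_pure(1) by blast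
    then have "Qe \<equiv>\<^sub>s P'" using Qe \<open>Qe = ress A (Par Q R)\<close> subst_pure(1) by auto
    moreover have "syn_trans (ress A (Par (Sum (SChoice (SIn b Q) M)) R)) (AIn b) (ress A (Par Q R))"
      using \<open>b \<notin> set A\<close> by (intro syn_trans_ress syn_ParL syn_Sum sum_ChoiceL sum_In) auto
    ultimately have "trans P (AIn b) P'"
      using A_rcv by (metis syn_trans_imp_trans trans_scong_left trans_scong_right)
    then show ?thesis using A_rcv C by simp
  qed (use C in auto)
next
  assume "trans P (AIn a) P'"
  then obtain Z where Z: "syn_trans P (AIn a) Z" "Z \<equiv>\<^sub>s P'"
    using trans_imp_syn_trans by blast
  from syn_trans_rcv_form[OF Z(1) finite.emptyI] obtain A M R P0 where
    nf: "P \<equiv>\<^sub>s ress A (Par (Sum (SChoice (SIn a P0) M)) R)" "Z \<equiv>\<^sub>s ress A (Par P0 R)" "a \<notin> set A"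
    by (rule rcv_formE)
  have "pure (ress A (Par P0 R))" using nf(1) assms scong_pure(1) by auto
  moreover have "ress A (Par P0 R) \<equiv>\<^sub>s P'" using nf(2) Z(2) scong_sym scong_trans by blast
  ultimately show "ltsAI P (HolePar (Out a)) P'"
    using ltsA_imp_ltsAI[OF A_rcv[OF nf(1) nf(3)]] by auto
qed

lemma ltsAI_In_iff:
  assumes "pure P" and "pure T"
  shows "ltsAI P (HolePar (Sum (SIn a T))) P' \<longleftrightarrow> (\<exists>P1. trans P (AOut a) P1 \<and> P' \<equiv>\<^sub>s Par P1 T)"
proof
  assume "ltsAI P (HolePar (Sum (SIn a T))) P'"
  then obtain Ce Qe T' where l: "ltsA P Ce Qe" and capt: "capt_free T' {} Qe"
      and Qe: "subst T' Qe \<equiv>\<^sub>s P'" and C: "subst_ctx T' Ce = HolePar (Sum (SIn a T))"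
    unfolding ltsAI_def by blast
  from l show "\<exists>P1. trans P (AOut a) P1 \<and> P' \<equiv>\<^sub>s Par P1 T"
  proof cases
    case (A_snd A b P0)
    have "b = a" "T' = T" using C A_snd by simp_all
    have P: "P \<equiv>\<^sub>s ress A (Par (Out a) P0)" using A_snd \<open>b = a\<close> by simp
    then have "pure P0" using assms(1) scong_pure(1) by fastforce
    have fresh: "set A \<inter> fn T = {}"
      using capt A_snd \<open>T' = T\<close> capt_free_pure(1)[OF \<open>pure P0\<close>] by auto
    have "P' \<equiv>\<^sub>s ress A (Par P0 T)"
      using Qe A_snd \<open>T' = T\<close> subst_pure(1)[OF \<open>pure P0\<close>] scong_sym by simp
    also have "\<dots> \<equiv>\<^sub>s Par (ress A P0) T" by (rule ress_Par_extr[OF fresh])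
    finally have "P' \<equiv>\<^sub>s Par (ress A P0) T" .
    moreover have "syn_trans (ress A (Par (Out a) P0)) (AOut a) (ress A (Par Zero P0))"
      using A_snd \<open>b = a\<close> by (intro syn_trans_ress syn_ParL syn_Out) auto
    then have "trans P (AOut a) (ress A P0)"
      using P ress_scong[OF Par_Zero_left]
      by (meson syn_trans_imp_trans trans_scong_left trans_scong_right)
    ultimately show ?thesis by blast
  qed (use C in auto)
next
  assume "\<exists>P1. trans P (AOut a) P1 \<and> P' \<equiv>\<^sub>s Par P1 T"
  then obtain P1 Z where Z: "syn_trans P (AOut a) Z" and "Z \<equiv>\<^sub>s P1" and P': "P' \<equiv>\<^sub>s Par P1 T"
    using trans_imp_syn_trans by blast
  have "P \<equiv>\<^sub>s ress [] (Par (Out a) Z)" using syn_trans_Out_inv[OF Z] by simp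
  from A_snd[OF this] have l: "ltsA P (HolePar (Sum (SIn a (Var 1)))) (ress [] (Par Z (Var 1)))"
    by simp
  have "pure Z" using \<open>P \<equiv>\<^sub>s ress [] (Par (Out a) Z)\<close> assms(1) scong_pure(1) by fastforce
  have "Par Z T \<equiv>\<^sub>s P'"
    using Par_scong_left[OF \<open>Z \<equiv>\<^sub>s P1\<close>] P' scong_sym scong_trans by blast
  then show "ltsAI P (HolePar (Sum (SIn a T))) P'"
    unfolding ltsAI_def using l assms(2) \<open>pure Z\<close>
    by (intro exI[of _ "HolePar (Sum (SIn a (Var 1)))"] exI[of _ "ress [] (Par Z (Var 1))"] exI[of _ T])
      (simp add: capt_free_pure subst_pure)
qed

lemma ltsAI_pure:
  assumes "pure P" and "ltsAI P C P'"
  shows "pure P'"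
  using ltsAI_labels[OF assms(2)]
proof (elim disjE exE conjE)
  assume "C = Hole"
  then show ?thesis using assms ltsAI_Hole_iff red_pure by blast
next
  fix a assume "C = HolePar (Out a)"
  then show ?thesis using assms ltsAI_Out_iff trans_pure by blast
next
  fix a T assume "pure T" and "C = HolePar (Sum (SIn a T))"
  then obtain P1 where "trans P (AOut a) P1" and "P' \<equiv>\<^sub>s Par P1 T"
    using assms ltsAI_In_iff by blast
  then show ?thesis using assms(1) \<open>pure T\<close> trans_pure scong_pure(1) by fastforce
qed

fun async_match :: "(proc \<Rightarrow> proc \<Rightarrow> bool) \<Rightarrow> proc \<Rightarrow> act \<Rightarrow> proc \<Rightarrow> bool" where
  "async_match R Q ATau P' \<longleftrightarrow> (\<exists>Q'. trans Q ATau Q' \<and> R P' Q')"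
| "async_match R Q (AOut a) P' \<longleftrightarrow> (\<exists>Q'. trans Q (AOut a) Q' \<and> R P' Q')"
| "async_match R Q (AIn a) P' \<longleftrightarrow>
     (\<exists>Q'. trans Q (AIn a) Q' \<and> R P' Q') \<or> (\<exists>Q'. trans Q ATau Q' \<and> R P' (Par Q' (Out a)))"

lemma async_match_iff:
  "(\<forall>\<mu> P'. trans P \<mu> P' \<longrightarrow> async_match R Q \<mu> P') \<longleftrightarrow>
     (\<forall>P'. trans P ATau P' \<longrightarrow> (\<exists>Q'. trans Q ATau Q' \<and> R P' Q')) \<and>
     (\<forall>a P'. trans P (AOut a) P' \<longrightarrow> (\<exists>Q'. trans Q (AOut a) Q' \<and> R P' Q')) \<and>
     (\<forall>a P'. trans P (AIn a) P' \<longrightarrow>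
        (\<exists>Q'. trans Q (AIn a) Q' \<and> R P' Q') \<or> (\<exists>Q'. trans Q ATau Q' \<and> R P' (Par Q' (Out a))))"
  (is "?match \<longleftrightarrow> ?conds")
proof
  assume ?match
  then show ?conds by (intro conjI allI impI) (metis async_match.simps)+
next
  assume ?conds
  show ?match
  proof (intro allI impI)
    fix \<mu> P' assume "trans P \<mu> P'"
    with \<open>?conds\<close> show "async_match R Q \<mu> P'" by (cases \<mu>) auto
  qed
qed

lemma async_bisimulation_iff_match:
  "async_bisimulation R \<longleftrightarrow>
     (\<forall>P Q. R P Q \<longrightarrow> R Q P) \<and> (\<forall>P Q \<mu> P'. R P Q \<longrightarrow> trans P \<mu> P' \<longrightarrow> async_match R Q \<mu> P')"
  unfolding async_bisimulation_def async_match_iff[symmetric] by blast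

lemma async_match_mono: "async_match R Q \<mu> P' \<Longrightarrow> (\<And>x y. R x y \<Longrightarrow> S x y) \<Longrightarrow> async_match S Q \<mu> P'"
  by (cases \<mu>) auto

lemma async_match_of_trans: "trans Q \<mu> Q' \<Longrightarrow> R P' Q' \<Longrightarrow> async_match R Q \<mu> P'"
  by (cases \<mu>) auto

lemma async_match_scong:
  assumes "Q \<equiv>\<^sub>s Q0" and "async_match R Q0 \<mu> P'"
  shows "async_match R Q \<mu> P'"
  using assms(2) trans_scong_left[OF assms(1)] by (cases \<mu>) auto

lemma async_match_pure:
  assumes "pure Q" and "pure P'" and "async_match R Q \<mu> P'"
  shows "async_match (\<lambda>x y. pure x \<and> pure y \<and> R x y) Q \<mu> P'"
proof -
  have "pure Q'" if "trans Q \<nu> Q'" for \<nu> Q'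
    using trans_pure that assms(1) by blast
  then show ?thesis
    using assms(2,3) by (cases \<mu>) auto
qed

lemma async_bisimulation_async_bisim: "async_bisimulation async_bisim"
  unfolding async_bisimulation_iff_match
proof (intro conjI allI impI)
  fix P Q assume "async_bisim P Q"
  then obtain R where R: "async_bisimulation R" "R P Q" unfolding async_bisim_def by blast
  then have "R Q P" unfolding async_bisimulation_iff_match by blast
  with R(1) show "async_bisim Q P" unfolding async_bisim_def by blast
next
  fix P Q \<mu> P' assume "async_bisim P Q" and "trans P \<mu> P'"
  then obtain R where R: "async_bisimulation R" "R P Q" unfolding async_bisim_def by blast
  then have "async_match R Q \<mu> P'" using \<open>trans P \<mu> P'\<close> unfolding async_bisimulation_iff_match by blast
  moreover have "R x y \<Longrightarrow> async_bisim x y" for x y using R(1) unfolding async_bisim_def by blast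
  ultimately show "async_match async_bisim Q \<mu> P'" by (rule async_match_mono)
qed

lemma async_bisim_sym: "async_bisim P Q \<Longrightarrow> async_bisim Q P"
  using async_bisimulation_async_bisim unfolding async_bisimulation_iff_match by blast

lemma async_bisim_match: "async_bisim P Q \<Longrightarrow> trans P \<mu> P' \<Longrightarrow> async_match async_bisim Q \<mu> P'"
  using async_bisimulation_async_bisim unfolding async_bisimulation_iff_match by blast

definition async_bisim_Par_context :: "proc \<Rightarrow> proc \<Rightarrow> bool" where
  "async_bisim_Par_context P Q \<longleftrightarrow> (\<exists>X Y T. P \<equiv>\<^sub>s Par X T \<and> Q \<equiv>\<^sub>s Par Y T \<and> async_bisim X Y)"

lemma async_bisim_Par_context_intro:
  "async_bisim X Y \<Longrightarrow> P \<equiv>\<^sub>s Par X T \<Longrightarrow> Q \<equiv>\<^sub>s Par Y T \<Longrightarrow> async_bisim_Par_context P Q"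
  unfolding async_bisim_Par_context_def by blast

lemma async_match_Par_left:
  assumes "async_match async_bisim Y \<mu> X'" and "W \<equiv>\<^sub>s Par X' T"
  shows "async_match async_bisim_Par_context (Par Y T) \<mu> W"
proof (cases \<mu>)
  case (AIn a)
  show ?thesis
  proof (cases "\<exists>Y'. trans Y (AIn a) Y' \<and> async_bisim X' Y'")
    case True
    then show ?thesis
      using AIn assms(2) by (auto intro: t_par async_bisim_Par_context_intro scong_refl)
  next
    case False
    then obtain Y' where "trans Y ATau Y'" and "async_bisim X' (Par Y' (Out a))"
      using AIn assms(1) by auto
    moreover have "Par (Par Y' T) (Out a) \<equiv>\<^sub>s Par (Par Y' (Out a)) T" by (rule Par_right_commute)
    ultimately show ?thesis
      using AIn assms(2) by (auto intro: t_par async_bisim_Par_context_intro)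
  qed
qed (use assms in \<open>auto intro: t_par async_bisim_Par_context_intro scong_refl\<close>)

lemma async_match_Comm_left:
  assumes "async_match async_bisim Y (AIn a) X'" and "trans T (AOut a) T'" and "W \<equiv>\<^sub>s Par X' T'"
  shows "async_match async_bisim_Par_context (Par Y T) ATau W"
proof (cases "\<exists>Y'. trans Y (AIn a) Y' \<and> async_bisim X' Y'")
  case True
  then show ?thesis
    using assms(2,3) by (auto intro: t_comm async_bisim_Par_context_intro scong_refl)
next
  case False
  then obtain Y' where "trans Y ATau Y'" and "async_bisim X' (Par Y' (Out a))"
    using assms(1) by auto
  moreover have "Par Y' T \<equiv>\<^sub>s Par (Par Y' (Out a)) T'"
  proof -
    have "Par Y' T \<equiv>\<^sub>s Par Y' (Par (Out a) T')" by (rule Par_scong_right[OF trans_Out_inv[OF assms(2)]])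
    also have "\<dots> \<equiv>\<^sub>s Par (Par Y' (Out a)) T'" by (rule scong_sym[OF scong_scong_s.par_assoc])
    finally show ?thesis .
  qed
  ultimately show ?thesis
    using assms(3) by (auto intro: t_par async_bisim_Par_context_intro)
qed

lemma async_match_Par_context:
  assumes "async_bisim X Y" and "trans (Par X T) \<mu> W"
  shows "async_match async_bisim_Par_context (Par Y T) \<mu> W"
  using assms(2)
proof (cases rule: trans_ParE)
  case (left X')
  then show ?thesis using async_match_Par_left async_bisim_match[OF assms(1)] by blast
next
  case (right T')
  then show ?thesis
    using assms(1) by (auto intro: async_match_of_trans trans_ParR async_bisim_Par_context_intro scong_refl)
next
  case (comm_left a X' T')
  then show ?thesis using async_match_Comm_left async_bisim_match[OF assms(1)] by blast
next
  case (comm_right a X' T')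
  then obtain Y' where "trans Y (AOut a) Y'" and "async_bisim X' Y'"
    using async_bisim_match[OF assms(1)] by fastforce
  then show ?thesis
    using comm_right by (auto intro: trans_CommR async_bisim_Par_context_intro scong_refl)
qed

lemma async_bisimulation_Par_context: "async_bisimulation async_bisim_Par_context"
  unfolding async_bisimulation_iff_match
proof (intro conjI allI impI)
  fix P Q assume "async_bisim_Par_context P Q"
  then show "async_bisim_Par_context Q P"
    unfolding async_bisim_Par_context_def using async_bisim_sym by blast
next
  fix P Q \<mu> P' assume "async_bisim_Par_context P Q" and "trans P \<mu> P'"
  then obtain X Y T where "P \<equiv>\<^sub>s Par X T" "Q \<equiv>\<^sub>s Par Y T" "async_bisim X Y"
    unfolding async_bisim_Par_context_def by blast
  then show "async_match async_bisim_Par_context Q \<mu> P'"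
    using \<open>trans P \<mu> P'\<close> by (meson async_match_Par_context async_match_scong scong_sym trans_scong_left)
qed

lemma async_bisim_Par:
  "async_bisim X Y \<Longrightarrow> P \<equiv>\<^sub>s Par X T \<Longrightarrow> Q \<equiv>\<^sub>s Par Y T \<Longrightarrow> async_bisim P Q"
  using async_bisimulation_Par_context async_bisim_Par_context_intro unfolding async_bisim_def by blast

lemma L_bisimulation_L_bisim: "L_bisimulation L (L_bisim L)"
  unfolding L_bisimulation_def
proof (intro conjI allI impI)
  fix P Q assume "L_bisim L P Q"
  then obtain R where R: "L_bisimulation L R" "R P Q" unfolding L_bisim_def by blast
  then have "R Q P" unfolding L_bisimulation_def by blast
  with R(1) show "L_bisim L Q P" unfolding L_bisim_def by blast
next
  fix P Q C P' assume "L_bisim L P Q" and step: "ltsAI P C P'"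
  then obtain R where R: "L_bisimulation L R" "R P Q" unfolding L_bisim_def by blast
  then have "if C \<in> L then \<exists>Q'. ltsAI Q C Q' \<and> R P' Q' else \<exists>Q'. red (fill C Q) Q' \<and> R P' Q'"
    using step unfolding L_bisimulation_def by blast
  moreover have "R x y \<Longrightarrow> L_bisim L x y" for x y using R(1) unfolding L_bisim_def by blast
  ultimately show "if C \<in> L then \<exists>Q'. ltsAI Q C Q' \<and> L_bisim L P' Q'
      else \<exists>Q'. red (fill C Q) Q' \<and> L_bisim L P' Q'"
    by (auto split: if_splits)
qed

lemma L_bisim_sym: "L_bisim L P Q \<Longrightarrow> L_bisim L Q P"
  using L_bisimulation_L_bisim unfolding L_bisimulation_def by blast

lemma L_bisim_in_L: "L_bisim L P Q \<Longrightarrow> ltsAI P C P' \<Longrightarrow> C \<in> L \<Longrightarrow> \<exists>Q'. ltsAI Q C Q' \<and> L_bisim L P' Q'"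
  using L_bisimulation_L_bisim unfolding L_bisimulation_def by (metis (full_types))

lemma L_bisim_not_in_L:
  "L_bisim L P Q \<Longrightarrow> ltsAI P C P' \<Longrightarrow> C \<notin> L \<Longrightarrow> \<exists>Q'. red (fill C Q) Q' \<and> L_bisim L P' Q'"
  using L_bisimulation_L_bisim unfolding L_bisimulation_def by (metis (full_types))

lemma fill_scong: "Q \<equiv>\<^sub>s Q0 \<Longrightarrow> fill C Q \<equiv>\<^sub>s fill C Q0"
  by (cases C) (auto intro: Par_scong_left)

lemma L_bisim_scong:
  assumes "L_bisim L P0 Q0" and "P \<equiv>\<^sub>s P0" and "Q \<equiv>\<^sub>s Q0"
  shows "L_bisim L P Q"
proof -
  define R where "R P Q \<longleftrightarrow> (\<exists>P0 Q0. P \<equiv>\<^sub>s P0 \<and> Q \<equiv>\<^sub>s Q0 \<and> L_bisim L P0 Q0)" for P Q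
  have "L_bisimulation L R" unfolding L_bisimulation_def
  proof (intro conjI allI impI)
    fix P Q assume "R P Q" then show "R Q P" unfolding R_def using L_bisim_sym by blast
  next
    fix P Q C P' assume "R P Q" and step: "ltsAI P C P'"
    then obtain P0 Q0 where P0: "P \<equiv>\<^sub>s P0" and Q0: "Q \<equiv>\<^sub>s Q0" and "L_bisim L P0 Q0"
      unfolding R_def by blast
    have step0: "ltsAI P0 C P'" using ltsAI_scong_left[OF scong_sym[OF P0] step] .
    show "if C \<in> L then \<exists>Q'. ltsAI Q C Q' \<and> R P' Q' else \<exists>Q'. red (fill C Q) Q' \<and> R P' Q'"
    proof (cases "C \<in> L")
      case True
      then obtain Q' where "ltsAI Q0 C Q'" and "L_bisim L P' Q'"
        using L_bisim_in_L[OF \<open>L_bisim L P0 Q0\<close> step0] by blast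
      moreover have "R P' Q'" unfolding R_def using \<open>L_bisim L P' Q'\<close> scong_refl by blast
      ultimately show ?thesis using True ltsAI_scong_left[OF Q0] by auto
    next
      case False
      then obtain Q' where "red (fill C Q0) Q'" and "L_bisim L P' Q'"
        using L_bisim_not_in_L[OF \<open>L_bisim L P0 Q0\<close> step0] by blast
      moreover have "R P' Q'" unfolding R_def using \<open>L_bisim L P' Q'\<close> scong_refl by blast
      ultimately show ?thesis using False red_scong_left[OF fill_scong[OF Q0]] by auto
    qed
  qed
  then show ?thesis
    using assms unfolding L_bisim_def R_def by blast
qed

lemma L_A_simps [simp]:
  "Hole \<in> L_A" "HolePar (Out a) \<notin> L_A" "HolePar (Sum (SIn a T)) \<in> L_A \<longleftrightarrow> pure T"
  unfolding L_A_def by auto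

lemma red_Par_Out_cases:
  assumes "red (Par Q (Out a)) W"
  obtains (input) Q' where "trans Q (AIn a) Q'" and "W \<equiv>\<^sub>s Q'"
    | (tau) Q' where "trans Q ATau Q'" and "W \<equiv>\<^sub>s Par Q' (Out a)"
  using assms unfolding red_iff_trans_Tau
proof (cases rule: trans_ParE)
  case (left Q')
  then show ?thesis by (rule tau)
next
  case (right T')
  from right(1) show ?thesis by (rule trans_OutE) simp
next
  case (comm_left b Q' T')
  from comm_left(3) obtain "b = a" and "T' \<equiv>\<^sub>s Zero" by (rule trans_OutE) simp
  have "W \<equiv>\<^sub>s Par Q' Zero" using comm_left(4) Par_scong_right[OF \<open>T' \<equiv>\<^sub>s Zero\<close>] by (rule scong_trans)
  also have "\<dots> \<equiv>\<^sub>s Q'" by (rule scong_scong_s.par_unit)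
  finally show ?thesis using comm_left(2) \<open>b = a\<close> input by blast
next
  case (comm_right b Q' T')
  from comm_right(3) show ?thesis by (rule trans_OutE) simp
qed

lemma trans_In_red_Par_Out: "trans Q (AIn a) Q' \<Longrightarrow> red (Par Q (Out a)) Q'"
  unfolding red_iff_trans_Tau
  using t_comm[OF _ t_out] scong_scong_s.par_unit by (rule trans_scong_right)

lemma L_bisim_L_A_match:
  assumes "pure P" and "pure Q" and "L_bisim L_A P Q" and "trans P \<mu> P'"
  shows "async_match (L_bisim L_A) Q \<mu> P'"
proof (cases \<mu>)
  case ATau
  then have "ltsAI P Hole P'" using assms ltsAI_Hole_iff red_iff_trans_Tau by blast
  then obtain Q' where "ltsAI Q Hole Q'" and "L_bisim L_A P' Q'"
    using L_bisim_in_L[OF assms(3)] by fastforce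
  then show ?thesis using ATau assms(2) ltsAI_Hole_iff red_iff_trans_Tau by auto
next
  case (AOut a)
  have "ltsAI P (HolePar (Sum (SIn a Zero))) (Par P' Zero)"
    using assms(1,4) AOut ltsAI_In_iff scong_refl by auto
  then obtain Q'' where "ltsAI Q (HolePar (Sum (SIn a Zero))) Q''" and "L_bisim L_A (Par P' Zero) Q''"
    using L_bisim_in_L[OF assms(3)] by fastforce
  then obtain Q' where "trans Q (AOut a) Q'" and "Q'' \<equiv>\<^sub>s Par Q' Zero" and "L_bisim L_A (Par P' Zero) Q''"
    using assms(2) ltsAI_In_iff by auto
  moreover have "L_bisim L_A P' Q'"
    using calculation L_bisim_scong scong_sym scong_scong_s.par_unit scong_trans by meson
  ultimately show ?thesis using AOut by auto
next
  case (AIn a)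
  have "ltsAI P (HolePar (Out a)) P'" using assms(1,4) AIn ltsAI_Out_iff by auto
  then obtain W where "red (Par Q (Out a)) W" and W: "L_bisim L_A P' W"
    using L_bisim_not_in_L[OF assms(3)] by fastforce
  then show ?thesis
  proof (cases rule: red_Par_Out_cases)
    case (input Q')
    then have "L_bisim L_A P' Q'" using L_bisim_scong[OF W scong_refl scong_sym] by blast
    then show ?thesis using AIn input(1) by auto
  next
    case (tau Q')
    then have "L_bisim L_A P' (Par Q' (Out a))" using L_bisim_scong[OF W scong_refl scong_sym] by blast
    then show ?thesis using AIn tau(1) by auto
  qed
qed

lemma L_bisim_L_A_imp_async_bisim:
  assumes "pure P" and "pure Q" and "L_bisim L_A P Q"
  shows "async_bisim P Q"
proof -
  define R where "R P Q \<longleftrightarrow> pure P \<and> pure Q \<and> L_bisim L_A P Q" for P Q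
  have "async_bisimulation R"
    unfolding async_bisimulation_iff_match
  proof (intro conjI allI impI)
    fix P Q assume "R P Q" then show "R Q P" unfolding R_def using L_bisim_sym by blast
  next
    fix P Q \<mu> P' assume "R P Q" and "trans P \<mu> P'"
    then have "async_match (\<lambda>x y. pure x \<and> pure y \<and> L_bisim L_A x y) Q \<mu> P'"
      unfolding R_def using L_bisim_L_A_match async_match_pure trans_pure by blast
    then show "async_match R Q \<mu> P'" unfolding R_def .
  qed
  then show ?thesis using assms unfolding async_bisim_def R_def by blast
qed

lemma async_bisim_imp_L_bisim_L_A_step:
  assumes "pure P" and "pure Q" and "async_bisim P Q" and "ltsAI P C P'"
  shows "if C \<in> L_A then \<exists>Q'. ltsAI Q C Q' \<and> pure Q' \<and> async_bisim P' Q'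
    else \<exists>Q'. red (fill C Q) Q' \<and> pure Q' \<and> async_bisim P' Q'"
  using ltsAI_labels[OF assms(4)]
proof (elim disjE exE conjE)
  assume C: "C = Hole"
  then have "trans P ATau P'" using assms(1,4) ltsAI_Hole_iff red_iff_trans_Tau by blast
  then obtain Q' where "trans Q ATau Q'" and "async_bisim P' Q'"
    using async_bisim_match[OF assms(3)] by fastforce
  then show ?thesis using C assms(2) ltsAI_Hole_iff red_iff_trans_Tau trans_pure by auto
next
  fix a assume C: "C = HolePar (Out a)"
  then have "trans P (AIn a) P'" using assms(1,4) ltsAI_Out_iff by blast
  then have "async_match async_bisim Q (AIn a) P'" using async_bisim_match[OF assms(3)] by blast
  then consider (input) Q' where "trans Q (AIn a) Q'" and "async_bisim P' Q'"
    | (tau) Q' where "trans Q ATau Q'" and "async_bisim P' (Par Q' (Out a))"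
    by auto
  then have "\<exists>Q'. red (Par Q (Out a)) Q' \<and> pure Q' \<and> async_bisim P' Q'"
  proof cases
    case (input Q')
    then show ?thesis using trans_In_red_Par_Out assms(2) trans_pure by blast
  next
    case (tau Q')
    moreover have "red (Par Q (Out a)) (Par Q' (Out a))"
      using red.par tau(1) red_iff_trans_Tau by blast
    ultimately show ?thesis using assms(2) trans_pure by auto
  qed
  then show ?thesis using C by simp
next
  fix a T assume "pure T" and C: "C = HolePar (Sum (SIn a T))"
  then obtain P1 where "trans P (AOut a) P1" and P': "P' \<equiv>\<^sub>s Par P1 T"
    using assms(1,4) ltsAI_In_iff by blast
  then obtain Q1 where "trans Q (AOut a) Q1" and "async_bisim P1 Q1"
    using async_bisim_match[OF assms(3)] by fastforce
  moreover have "ltsAI Q C (Par Q1 T)"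
    using calculation(1) C assms(2) \<open>pure T\<close> ltsAI_In_iff scong_refl by blast
  moreover have "async_bisim P' (Par Q1 T)"
    using async_bisim_Par[OF \<open>async_bisim P1 Q1\<close> P' scong_refl] .
  ultimately show ?thesis using C assms(2) \<open>pure T\<close> trans_pure by auto
qed

lemma async_bisim_imp_L_bisim_L_A:
  assumes "pure P" and "pure Q" and "async_bisim P Q"
  shows "L_bisim L_A P Q"
proof -
  define R where "R P Q \<longleftrightarrow> pure P \<and> pure Q \<and> async_bisim P Q" for P Q
  have "L_bisimulation L_A R"
    unfolding L_bisimulation_def
  proof (intro conjI allI impI)
    fix P Q assume "R P Q" then show "R Q P" unfolding R_def using async_bisim_sym by blast
  next
    fix P Q C P' assume "R P Q" and step: "ltsAI P C P'"
    then have "pure P'" using ltsAI_pure unfolding R_def by blast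
    with \<open>R P Q\<close> show "if C \<in> L_A then \<exists>Q'. ltsAI Q C Q' \<and> R P' Q' else \<exists>Q'. red (fill C Q) Q' \<and> R P' Q'"
      using async_bisim_imp_L_bisim_L_A_step[OF _ _ _ step] unfolding R_def by auto
  qed
  then show ?thesis using assms unfolding L_bisim_def R_def by blast
qed

theorem mainTheorem7:
  assumes "pure P" and "pure Q"
  shows "L_bisim L_A P Q \<longleftrightarrow> async_bisim P Q"
  using L_bisim_L_A_imp_async_bisim async_bisim_imp_L_bisim_L_A assms by blast

end
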